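(* Fix $\varepsilon\in\{-1,1\}$. Let $P_0^{(0)},P_1^{(0)},P_2^{(0)}\in\mathbb H$ form a hyperbolic triangle, and for $k\ge1$ let $P_0^{(k)}P_1^{(k)}P_2^{(k)}$ be the Napoleonization (with sign $\varepsilon$) of $P_0^{(k-1)}P_1^{(k-1)}P_2^{(k-1)}$, where before each Napoleonization the vertices of the current triangle are labelled so that $\langle P_0\tilde\times P_1,P_2\rangle\ge0$. Then, as $k\to+\infty$, the triangles become more nearly equilateral and shrink to a point: for every $i\in\mathbb Z/3\mathbb Z$, $-\langle P^{(k)}_{i+1},P^{(k)}_{i+2}\rangle\to1$, i.e. the hyperbolic length $\operatorname{arccosh}(-\langle P^{(k)}_{i+1},P^{(k)}_{i+2}\rangle)$ of every side tends to $0$ (equivalently $\sqrt{1-2\langle P^{(k)}_{i+1},P^{(k)}_{i+2}\rangle}\to\sqrt3$).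
   Context: On $\mathbb R^3$ the Minkowski form is $\langle v,w\rangle=-v_1w_1+v_2w_2+v_3w_3$; $\mathbb H=\{P\in\mathbb R^3:\langle P,P\rangle=-1,\ P_1\ge1\}$, with distance $\operatorname{arccosh}(-\langle P,Q\rangle)$. The hyperbolic cross product is $v\tilde\times w:=J(v\times w)$ with $J=\mathrm{diag}(-1,1,1)$ and $\times$ the Euclidean cross product. The centroid of $A,B,C\in\mathbb H$ is $(A+B+C)/\sqrt{-\langle A+B+C,A+B+C\rangle}$. Napoleonization with sign $\varepsilon$ of a triangle $P_0P_1P_2$ (vertices labelled so that $\langle P_0\tilde\times P_1,P_2\rangle\ge0$): for $i\in\mathbb Z/3\mathbb Z$ let $Q_i=\frac{-\langle P_{i+1},P_{i+2}\rangle(P_{i+1}+P_{i+2})+\varepsilon\sqrt{1-2\langle P_{i+1},P_{i+2}\rangle}\,P_{i+1}\tilde\times P_{i+2}}{1-\langle P_{i+1},P_{i+2}\rangle}$ (so $P_{i+1}P_{i+2}Q_i$ is equilateral) and let $R_i$ be the centroid of $P_{i+1}P_{i+2}Q_i$, which equals $\frac{\sqrt{1-2\langle P_{i+1},P_{i+2}\rangle}(P_{i+1}+P_{i+2})+\varepsilon P_{i+1}\tilde\times P_{i+2}}{\sqrt3(1-\langle P_{i+1},P_{i+2}\rangle)}$; the Napoleonization is $R_0R_1R_2$. *)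

theory Defs
  imports "HOL-Analysis.Analysis" "HOL-Analysis.Cross3"
begin

definition mink :: "real^3 \<Rightarrow> real^3 \<Rightarrow> real" where
  "mink v w = - (v$1 * w$1) + v$2 * w$2 + v$3 * w$3"

definition hyp :: "(real^3) set" where
  "hyp = {P. mink P P = -1 \<and> P$1 \<ge> 1}"

definition hdist :: "real^3 \<Rightarrow> real^3 \<Rightarrow> real" where
  "hdist P Q = arcosh (- mink P Q)"

definition Jmap :: "real^3 \<Rightarrow> real^3" where
  "Jmap v = (\<chi> i. if i = 1 then - (v$i) else v$i)"

definition hcross :: "real^3 \<Rightarrow> real^3 \<Rightarrow> real^3" where
  "hcross v w = Jmap (cross3 v w)"

definition hcentroid :: "real^3 \<Rightarrow> real^3 \<Rightarrow> real^3 \<Rightarrow> real^3" where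
  "hcentroid A B C = (1 / sqrt (- mink (A + B + C) (A + B + C))) *\<^sub>R (A + B + C)"

text \<open>Apex Q of the equilateral triangle erected (sign eps) on the side P P'.\<close>
definition napQ :: "real \<Rightarrow> real^3 \<Rightarrow> real^3 \<Rightarrow> real^3" where
  "napQ eps P P' =
     (1 / (1 - mink P P')) *\<^sub>R
       ((- mink P P') *\<^sub>R (P + P') + (eps * sqrt (1 - 2 * mink P P')) *\<^sub>R hcross P P')"

definition napR :: "real \<Rightarrow> real^3 \<Rightarrow> real^3 \<Rightarrow> real^3" where
  "napR eps P P' = hcentroid P P' (napQ eps P P')"

text \<open>A hyperbolic triangle: three points of H not lying on a common geodesic
  (geodesics of H are its intersections with planes through the origin).\<close>
definition hyp_triangle :: "real^3 \<Rightarrow> real^3 \<Rightarrow> real^3 \<Rightarrow> bool" where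
  "hyp_triangle A B C \<longleftrightarrow> A \<in> hyp \<and> B \<in> hyp \<and> C \<in> hyp \<and>
     \<not> (\<exists>n::real^3. n \<noteq> 0 \<and> n \<bullet> A = 0 \<and> n \<bullet> B = 0 \<and> n \<bullet> C = 0)"

end

theory Submission
  imports Defs
begin

(* Write a, b, c for the negated Minkowski products of the vertices B C, C A, A B, i.e. the
   hyperbolic cosines of the sides, and D = <A x~ B, C> >= 0 for the oriented volume, so that
   D^2 = 1 + 2abc - a^2 - b^2 - c^2.  The Napoleon centres have an explicit closed form, which makes
   the hyperbolic cosine of each new side an explicit function of a, b, c and D.  Two AM-GM
   estimates and a polynomial inequality bound it by napoleon_bound M = M - (M - 1)^2 / (4 (M + 1)),
   where M is the largest of a, b, c.  So the hyperbolic cosine of the longest side decreases along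
   the iteration, and its limit is a fixed point of napoleon_bound, which can only be 1. *)

section \<open>The Minkowski form and the hyperbolic cross product\<close>

lemma hcross_nth [simp]:
  "hcross x y $ 1 = - (x$2 * y$3 - y$2 * x$3)"
  "hcross x y $ 2 = x$3 * y$1 - y$3 * x$1"
  "hcross x y $ 3 = x$1 * y$2 - y$1 * x$2"
  by (simp_all add: hcross_def Jmap_def cross_components)

lemma mink_commute: "mink v w = mink w v"
  by (simp add: mink_def algebra_simps)

lemma mink_add_left [simp]: "mink (u + v) w = mink u w + mink v w"
  and mink_add_right [simp]: "mink w (u + v) = mink w u + mink w v"
  and mink_scaleR_left [simp]: "mink (c *\<^sub>R u) w = c * mink u w"
  and mink_scaleR_right [simp]: "mink w (c *\<^sub>R u) = c * mink w u"
  and mink_minus_left [simp]: "mink (- u) w = - mink u w"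
  and mink_minus_right [simp]: "mink w (- u) = - mink w u"
  and mink_diff_left [simp]: "mink (u - v) w = mink u w - mink v w"
  and mink_diff_right [simp]: "mink w (u - v) = mink w u - mink w v"
  by (simp_all add: mink_def algebra_simps)

lemma mink_hcross_orthogonal [simp]:
  "mink u (hcross u v) = 0" "mink v (hcross u v) = 0"
  "mink (hcross u v) u = 0" "mink (hcross u v) v = 0"
  by (simp_all add: mink_def algebra_simps)

lemma mink_hcross_cyclic: "mink (hcross A B) C = mink (hcross B C) A"
  by (simp add: mink_def algebra_simps)

lemma mink_hcross_hcross:
  "mink (hcross u v) (hcross w z) = mink u z * mink v w - mink u w * mink v z"
  by (simp add: mink_def algebra_simps)

lemma mink_hcross_squared:
  "(mink (hcross A B) C)\<^sup>2 = - (mink A A * mink B B * mink C C + 2 * mink A B * mink B C * mink C A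
     - mink A A * (mink B C)\<^sup>2 - mink B B * (mink C A)\<^sup>2 - mink C C * (mink A B)\<^sup>2)"
  by (simp add: mink_def power2_eq_square algebra_simps)

lemma hyp_mink_self: "A \<in> hyp \<Longrightarrow> mink A A = -1"
  by (simp add: hyp_def)

lemma hyp_neg_mink_ge_1:
  assumes "A \<in> hyp" "B \<in> hyp"
  shows "1 \<le> - mink A B"
proof -
  have A: "(A$1)\<^sup>2 = 1 + (A$2)\<^sup>2 + (A$3)\<^sup>2" "1 \<le> A$1"
    and B: "(B$1)\<^sup>2 = 1 + (B$2)\<^sup>2 + (B$3)\<^sup>2" "1 \<le> B$1"
    using assms by (auto simp: hyp_def mink_def power2_eq_square)
  define p where "p = A$2 * B$2 + A$3 * B$3"
  have "p\<^sup>2 \<le> ((A$2)\<^sup>2 + (A$3)\<^sup>2) * ((B$2)\<^sup>2 + (B$3)\<^sup>2)"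
    using zero_le_power2[of "A$2 * B$3 - A$3 * B$2"]
    by (simp add: p_def power2_eq_square algebra_simps)
  also have "\<dots> = ((A$1)\<^sup>2 - 1) * ((B$1)\<^sup>2 - 1)"
    using A B by simp
  also have "\<dots> \<le> (A$1 * B$1 - 1)\<^sup>2"
    using zero_le_power2[of "A$1 - B$1"] by (simp add: power2_eq_square algebra_simps)
  finally have "p \<le> A$1 * B$1 - 1"
    using A(2) B(2) by (metis power2_le_imp_le diff_ge_0_iff_ge mult_mono' mult_1 zero_le_one)
  then show ?thesis
    by (simp add: mink_def p_def)
qed

lemma hyp_memI_mink_neg:
  assumes "mink R R = -1" "A \<in> hyp" "mink R A < 0"
  shows "R \<in> hyp"
proof (rule ccontr)
  assume "R \<notin> hyp"
  with assms(1) have "R$1 < 1"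
    by (auto simp: hyp_def)
  moreover have "(R$1)\<^sup>2 = 1 + (R$2)\<^sup>2 + (R$3)\<^sup>2"
    using assms(1) by (simp add: mink_def power2_eq_square)
  then have "1 \<le> (R$1)\<^sup>2"
    using zero_le_power2[of "R$2"] zero_le_power2[of "R$3"] by linarith
  then have "\<not> \<bar>R$1\<bar> < 1"
    using abs_square_less_1[of "R$1"] by linarith
  ultimately have "R$1 \<le> -1"
    by linarith
  with assms(1) have "- R \<in> hyp"
    by (simp add: hyp_def mink_def)
  from hyp_neg_mink_ge_1[OF this assms(2)] assms(3) show False
    by simp
qed

section \<open>The Napoleon centre of a side\<close>

lemma mink_napoleon_direction_self:
  assumes "A \<in> hyp" "B \<in> hyp" "e = 1 \<or> e = -1"
  defines "V \<equiv> sqrt (1 - 2 * mink A B) *\<^sub>R (A + B) + e *\<^sub>R hcross A B"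
  shows "mink V V = - 3 * (1 - mink A B)\<^sup>2"
proof -
  have "(sqrt (1 - 2 * mink A B))\<^sup>2 = 1 - 2 * mink A B"
    using hyp_neg_mink_ge_1[OF assms(1,2)] by simp
  moreover have "mink (hcross A B) (hcross A B) = (mink A B)\<^sup>2 - 1"
    using hyp_mink_self[OF assms(1)] hyp_mink_self[OF assms(2)]
    by (simp add: mink_hcross_hcross mink_commute[of B A] power2_eq_square)
  ultimately show ?thesis
    using hyp_mink_self[OF assms(1)] hyp_mink_self[OF assms(2)] assms(3)
    by (elim disjE; simp add: V_def mink_commute[of B A] mink_commute[of "hcross A B" A]
        mink_commute[of "hcross A B" B] algebra_simps power2_eq_square)
qed

lemma napR_closed_form:
  assumes "A \<in> hyp" "B \<in> hyp" "e = 1 \<or> e = -1"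
  shows "napR e A B = (1 / (sqrt 3 * (1 - mink A B))) *\<^sub>R
           (sqrt (1 - 2 * mink A B) *\<^sub>R (A + B) + e *\<^sub>R hcross A B)"
proof -
  define d where "d = 1 - mink A B"
  define s where "s = sqrt (1 - 2 * mink A B)"
  define V where "V = s *\<^sub>R (A + B) + e *\<^sub>R hcross A B"
  have "2 \<le> d"
    using hyp_neg_mink_ge_1[OF assms(1,2)] by (simp add: d_def)
  then have s: "s\<^sup>2 = 2 * d - 1" "0 < s" and "d \<noteq> 0"
    by (simp_all add: s_def d_def)
  have sum: "A + B + napQ e A B = (s / d) *\<^sub>R V"
  proof -
    have "A + B + napQ e A B = (1 + (d - 1) / d) *\<^sub>R (A + B) + (e * s / d) *\<^sub>R hcross A B"
      by (simp add: napQ_def d_def s_def algebra_simps)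
    also have "1 + (d - 1) / d = s * s / d"
      using \<open>d \<noteq> 0\<close> s by (simp add: field_simps power2_eq_square)
    finally show ?thesis
      by (simp add: V_def algebra_simps)
  qed
  have VV: "mink V V = - 3 * d\<^sup>2"
    using mink_napoleon_direction_self[OF assms] by (simp only: V_def s_def d_def)
  have "mink (A + B + napQ e A B) (A + B + napQ e A B) = (s / d) * (s / d) * mink V V"
    by (simp only: sum mink_scaleR_left mink_scaleR_right)
  also have "\<dots> = - (sqrt 3 * s)\<^sup>2"
    using \<open>d \<noteq> 0\<close> by (simp add: VV field_simps power2_eq_square)
  finally have norm: "sqrt (- mink (A + B + napQ e A B) (A + B + napQ e A B)) = sqrt 3 * s"
    using s by simp
  have "napR e A B = (1 / sqrt (- mink (A + B + napQ e A B) (A + B + napQ e A B))) *\<^sub>R (A + B + napQ e A B)"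
    by (simp add: napR_def hcentroid_def)
  also have "\<dots> = (1 / (sqrt 3 * d)) *\<^sub>R V"
    unfolding norm unfolding sum using s by simp
  finally show ?thesis
    by (simp add: V_def s_def d_def)
qed

lemma napR_in_hyp:
  assumes "A \<in> hyp" "B \<in> hyp" "e = 1 \<or> e = -1"
  shows "napR e A B \<in> hyp"
proof -
  define d where "d = 1 - mink A B"
  define V where "V = sqrt (1 - 2 * mink A B) *\<^sub>R (A + B) + e *\<^sub>R hcross A B"
  have "2 \<le> d"
    using hyp_neg_mink_ge_1[OF assms(1,2)] by (simp add: d_def)
  have R: "napR e A B = (1 / (sqrt 3 * d)) *\<^sub>R V"
    using napR_closed_form[OF assms] by (simp add: V_def d_def)
  have VV: "mink V V = - 3 * d\<^sup>2"
    using mink_napoleon_direction_self[OF assms] by (simp only: V_def d_def)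
  have "mink (napR e A B) (napR e A B) = (1 / (sqrt 3 * d)) * (1 / (sqrt 3 * d)) * mink V V"
    by (simp only: R mink_scaleR_left mink_scaleR_right)
  also have "\<dots> = -1"
    using \<open>2 \<le> d\<close> by (simp add: VV field_simps power2_eq_square)
  finally have "mink (napR e A B) (napR e A B) = -1" .
  moreover have "mink V A = - sqrt (1 - 2 * mink A B) * d"
    using hyp_mink_self[OF assms(1)]
    by (simp add: V_def d_def mink_commute[of B A] mink_commute[of "hcross A B" A] algebra_simps)
  then have "mink (napR e A B) A < 0"
    using \<open>2 \<le> d\<close> hyp_neg_mink_ge_1[OF assms(1,2)] by (simp add: R mult_pos_neg divide_neg_pos)
  ultimately show ?thesis
    using hyp_memI_mink_neg assms(1) by blast
qed

lemma neg_mink_napR_napR: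
  assumes A: "A \<in> hyp" and B: "B \<in> hyp" and C: "C \<in> hyp" and e: "e = 1 \<or> e = -1"
  defines "a \<equiv> - mink B C" and "b \<equiv> - mink C A" and "c \<equiv> - mink A B"
    and "D \<equiv> mink (hcross A B) C"
  shows "- mink (napR e C A) (napR e A B) =
    (sqrt (1 + 2*b) * sqrt (1 + 2*c) * (1 + a + b + c) - e * D * (sqrt (1 + 2*b) + sqrt (1 + 2*c))
      + b * c - a) / (3 * (1 + b) * (1 + c))"
proof -
  define u where "u = sqrt (1 + 2*b)"
  define v where "v = sqrt (1 + 2*c)"
  have "1 \<le> b" "1 \<le> c"
    unfolding b_def c_def using hyp_neg_mink_ge_1 A B C by blast+
  have R1: "napR e C A = (1 / (sqrt 3 * (1 + b))) *\<^sub>R (u *\<^sub>R (C + A) + e *\<^sub>R hcross C A)"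
    using napR_closed_form[OF C A e] by (simp add: u_def b_def)
  have R2: "napR e A B = (1 / (sqrt 3 * (1 + c))) *\<^sub>R (v *\<^sub>R (A + B) + e *\<^sub>R hcross A B)"
    using napR_closed_form[OF A B e] by (simp add: v_def c_def)
  have "mink C (hcross A B) = D"
    by (simp add: D_def mink_commute)
  moreover have "mink (hcross C A) B = D"
    by (simp only: D_def mink_hcross_cyclic[of C A B])
  moreover have "mink (hcross C A) (hcross A B) = a - b * c"
    using hyp_mink_self[OF A] by (simp add: mink_hcross_hcross a_def b_def c_def mink_commute[of C B])
  ultimately have V: "mink (u *\<^sub>R (C + A) + e *\<^sub>R hcross C A) (v *\<^sub>R (A + B) + e *\<^sub>R hcross A B)
      = - (u * v * (1 + a + b + c)) + e * u * D + e * v * D + (a - b * c)"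
    using hyp_mink_self[OF A] e
    by (auto simp: a_def b_def c_def mink_commute[of C B] algebra_simps)
  have "- mink (napR e C A) (napR e A B) =
      - ((1 / (sqrt 3 * (1 + b))) * (1 / (sqrt 3 * (1 + c)))
         * (- (u * v * (1 + a + b + c)) + e * u * D + e * v * D + (a - b * c)))"
    unfolding R1 R2 mink_scaleR_left mink_scaleR_right V by (simp only: mult_ac)
  also have "\<dots> = (u * v * (1 + a + b + c) - e * D * (u + v) + b * c - a) / (3 * (1 + b) * (1 + c))"
    using \<open>1 \<le> b\<close> \<open>1 \<le> c\<close> by (simp add: field_simps minus_divide_left)
  finally show ?thesis
    by (simp add: u_def v_def)
qed

section \<open>The contraction estimate\<close>

definition napoleon_bound :: "real \<Rightarrow> real" where
  "napoleon_bound M = M - (M - 1)\<^sup>2 / (4 * (M + 1))"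

text \<open>The certificate writes the difference as a nonnegative combination of products of the
  slacks \<open>M - 1\<close>, \<open>M - a\<close>, \<open>M - b\<close>, \<open>M - c\<close>, \<open>a - 1\<close>, \<open>b - 1\<close>, \<open>c - 1\<close>.\<close>
lemma napoleon_polynomial_ineq:
  fixes a b c M :: real
  assumes "1 \<le> a" "1 \<le> b" "1 \<le> c" "a \<le> M" "b \<le> M" "c \<le> M"
  shows "(M + 1) * (M - 1) * ((1 + b + c) * (1 + a + b + c) + (M - 1) * (1 + b + c) + b * c - a)
           + (M + 1) * (1 + 2 * a * b * c - a\<^sup>2 - b\<^sup>2 - c\<^sup>2)
         \<le> (M + 1) * (M - 1) * (3 * (1 + b) * (1 + c) * napoleon_bound M)"
proof -
  define m where "m = M - 1"
  define y0 where "y0 = M - a"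
  define y1 where "y1 = M - b"
  define y2 where "y2 = M - c"
  have "0 \<le> m" "0 \<le> y0" "0 \<le> y1" "0 \<le> y2" "0 \<le> m - y0" "0 \<le> m - y1" "0 \<le> m - y2"
    using assms by (auto simp: m_def y0_def y1_def y2_def)
  define cert where "cert =
      (2*y2*y2 + 4*y1*(m-y2) + 2*y1*y1 + 4*y0*(m-y1) + 2*y0*y0 + 8*m*y2 + 4*m*y1 + 4*y0*(m-y2))
    + (4*y0*y1*y2 + m*y2*(m-y2) + 2*m*y2*(m-y0) + m*y1*(m-y1) + 2*m*m*(m-y0) + 8*m*y0*(m-y1)
       + m*y0*y0 + m*m*y2 + 6*m*y1*(m-y2) + 6*m*y0*(m-y2) + 3*m*m*(m-y1))
    + (m*m*y2*(m-y2) + m*m*y1*(m-y1) + 2*m*y0*(m-y1)*(m-y2) + m*m*y0*(m-y1)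
       + 4*m*m*(m-y1)*(m-y2) + 3/2*m*m*m*(m-y1) + m*m*y0*(m-y2) + 3/2*m*m*m*(m-y2))
    + 9/4*m*m*m*(m-y1)*(m-y2)"
  have "0 \<le> cert"
    unfolding cert_def using \<open>0 \<le> m\<close> \<open>0 \<le> y0\<close> \<open>0 \<le> y1\<close> \<open>0 \<le> y2\<close>
      \<open>0 \<le> m - y0\<close> \<open>0 \<le> m - y1\<close> \<open>0 \<le> m - y2\<close>
    by (intro add_nonneg_nonneg mult_nonneg_nonneg) simp_all
  moreover have "(M + 1) * (M - 1) * (3 * (1 + b) * (1 + c) * napoleon_bound M)
      - ((M + 1) * (M - 1) * ((1 + b + c) * (1 + a + b + c) + (M - 1) * (1 + b + c) + b * c - a)
         + (M + 1) * (1 + 2 * a * b * c - a\<^sup>2 - b\<^sup>2 - c\<^sup>2)) = cert"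
    using assms unfolding cert_def m_def y0_def y1_def y2_def napoleon_bound_def
    by (simp add: field_simps power2_eq_square)
  ultimately show ?thesis
    by linarith
qed

lemma napoleon_numerator_le:
  fixes a b c D e t :: real
  assumes "0 \<le> a" "0 \<le> b" "0 \<le> c" "0 \<le> D" "0 < t" and e: "e = 1 \<or> e = -1"
  shows "sqrt (1 + 2*b) * sqrt (1 + 2*c) * (1 + a + b + c) - e * D * (sqrt (1 + 2*b) + sqrt (1 + 2*c))
           \<le> (1 + b + c) * (1 + a + b + c) + t * (1 + b + c) + D\<^sup>2 / t"
proof -
  define u where "u = sqrt (1 + 2*b)"
  define v where "v = sqrt (1 + 2*c)"
  have u: "0 \<le> u" "u\<^sup>2 = 1 + 2*b" and v: "0 \<le> v" "v\<^sup>2 = 1 + 2*c"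
    using assms by (simp_all add: u_def v_def)
  have uv: "u * v \<le> 1 + b + c" and uv_sum: "(u + v)\<^sup>2 \<le> 4 * (1 + b + c)"
    using zero_le_power2[of "u - v"] u v by (simp_all add: power2_eq_square algebra_simps)
  have "- e * D * (u + v) \<le> D * (u + v)"
    using e \<open>0 \<le> D\<close> u v by auto
  also have "\<dots> \<le> t * (1 + b + c) + D\<^sup>2 / t"
  proof -
    have "t * (D * (u + v)) \<le> t * (t * (u + v)\<^sup>2 / 4) + D\<^sup>2"
      using zero_le_power2[of "t * (u + v) / 2 - D"] by (simp add: power2_eq_square algebra_simps)
    also have "\<dots> \<le> t * (t * (1 + b + c)) + D\<^sup>2"
      using uv_sum \<open>0 < t\<close> by simp
    finally show ?thesis
      using \<open>0 < t\<close> by (simp add: field_simps)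
  qed
  finally show ?thesis
    using mult_right_mono[OF uv, of "1 + a + b + c"] assms unfolding u_def v_def by linarith
qed

lemma napoleon_cosh_ineq:
  fixes a b c D M e :: real
  assumes abc: "1 \<le> a" "1 \<le> b" "1 \<le> c" "a \<le> M" "b \<le> M" "c \<le> M" and "0 \<le> D"
    and D2: "D\<^sup>2 = 1 + 2 * a * b * c - a\<^sup>2 - b\<^sup>2 - c\<^sup>2" and e: "e = 1 \<or> e = -1"
  shows "(sqrt (1 + 2*b) * sqrt (1 + 2*c) * (1 + a + b + c) - e * D * (sqrt (1 + 2*b) + sqrt (1 + 2*c))
           + b * c - a) / (3 * (1 + b) * (1 + c)) \<le> napoleon_bound M"
proof (cases "M = 1")
  case True
  with abc D2 have "a = 1" "b = 1" "c = 1" "D = 0"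
    by simp_all
  moreover have "sqrt 3 * sqrt 3 = (3::real)"
    by simp
  ultimately show ?thesis
    using True by (simp add: napoleon_bound_def)
next
  case False
  with abc have m: "0 < M - 1"
    by linarith
  define N where "N = (1 + b + c) * (1 + a + b + c) + (M - 1) * (1 + b + c) + b * c - a"
  have "(M + 1) * (M - 1) * (N + D\<^sup>2 / (M - 1)) = (M + 1) * (M - 1) * N + (M + 1) * D\<^sup>2"
    using m by (simp add: field_simps)
  also have "\<dots> \<le> (M + 1) * (M - 1) * (3 * (1 + b) * (1 + c) * napoleon_bound M)"
    using napoleon_polynomial_ineq[OF abc] unfolding D2[symmetric] N_def by linarith
  finally have "N + D\<^sup>2 / (M - 1) \<le> 3 * (1 + b) * (1 + c) * napoleon_bound M"
    using m by (simp add: mult_le_cancel_left_pos)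
  moreover have "sqrt (1 + 2*b) * sqrt (1 + 2*c) * (1 + a + b + c) - e * D * (sqrt (1 + 2*b) + sqrt (1 + 2*c))
      + b * c - a \<le> N + D\<^sup>2 / (M - 1)"
    using napoleon_numerator_le[of a b c D "M - 1" e] abc \<open>0 \<le> D\<close> e m by (simp add: N_def)
  ultimately show ?thesis
    using abc by (simp add: divide_le_eq mult.commute)
qed

definition cosh_longest_side :: "real^3 \<Rightarrow> real^3 \<Rightarrow> real^3 \<Rightarrow> real" where
  "cosh_longest_side A B C = max (- mink B C) (max (- mink C A) (- mink A B))"

lemma neg_mink_napR_napR_le:
  assumes A: "A \<in> hyp" and B: "B \<in> hyp" and C: "C \<in> hyp" and e: "e = 1 \<or> e = -1"
    and oriented: "0 \<le> mink (hcross A B) C" and M: "cosh_longest_side A B C \<le> M"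
  shows "- mink (napR e C A) (napR e A B) \<le> napoleon_bound M"
proof -
  have "(mink (hcross A B) C)\<^sup>2
      = 1 + 2 * (- mink B C) * (- mink C A) * (- mink A B)
          - (- mink B C)\<^sup>2 - (- mink C A)\<^sup>2 - (- mink A B)\<^sup>2"
    unfolding mink_hcross_squared using hyp_mink_self[OF A] hyp_mink_self[OF B] hyp_mink_self[OF C]
    by (simp add: power2_eq_square algebra_simps)
  moreover have "1 \<le> - mink B C" "1 \<le> - mink C A" "1 \<le> - mink A B"
    using hyp_neg_mink_ge_1 A B C by blast+
  moreover have "- mink B C \<le> M" "- mink C A \<le> M" "- mink A B \<le> M"
    using M by (simp_all add: cosh_longest_side_def)
  ultimately show ?thesis
    unfolding neg_mink_napR_napR[OF A B C e] using oriented e by (intro napoleon_cosh_ineq)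
qed

lemma cosh_longest_side_rotate: "cosh_longest_side B C A = cosh_longest_side A B C"
  by (simp add: cosh_longest_side_def max.commute max.left_commute)

lemma cosh_longest_side_napR_le:
  assumes A: "A \<in> hyp" and B: "B \<in> hyp" and C: "C \<in> hyp" and e: "e = 1 \<or> e = -1"
    and oriented: "0 \<le> mink (hcross A B) C" and M: "cosh_longest_side A B C \<le> M"
  shows "cosh_longest_side (napR e B C) (napR e C A) (napR e A B) \<le> napoleon_bound M"
proof -
  have "0 \<le> mink (hcross B C) A" "0 \<le> mink (hcross C A) B"
    using oriented mink_hcross_cyclic[of A B C] mink_hcross_cyclic[of B C A] by simp_all
  moreover have "cosh_longest_side B C A \<le> M" "cosh_longest_side C A B \<le> M"
    using M by (simp_all only: cosh_longest_side_rotate)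
  ultimately show ?thesis
    using neg_mink_napR_napR_le[OF A B C e oriented M] neg_mink_napR_napR_le[OF B C A e]
      neg_mink_napR_napR_le[OF C A B e]
    by (simp add: cosh_longest_side_def[of "napR e B C"])
qed

lemma neg_mink_le_cosh_longest_side:
  fixes i j :: nat
  assumes "i < 3" "j < 3" "i \<noteq> j"
  shows "- mink (Q i) (Q j) \<le> cosh_longest_side (Q 0) (Q 1) (Q 2)"
proof -
  have "i = 0 \<or> i = 1 \<or> i = 2" "j = 0 \<or> j = 1 \<or> j = 2"
    using assms by auto
  with \<open>i \<noteq> j\<close> show ?thesis
    by (auto simp: cosh_longest_side_def mink_commute)
qed

lemma cosh_longest_side_permutes_le:
  assumes "\<sigma> permutes {0, 1, 2::nat}"
  shows "cosh_longest_side (Q (\<sigma> 0)) (Q (\<sigma> 1)) (Q (\<sigma> 2)) \<le> cosh_longest_side (Q 0) (Q 1) (Q 2)"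
proof -
  have "\<sigma> i < 3" if "i < 3" for i
    using permutes_in_image[OF assms, of i] that by auto
  moreover have "\<sigma> i \<noteq> \<sigma> j" if "i \<noteq> j" for i j
    using permutes_inj[OF assms] that by (metis injD)
  ultimately show ?thesis
    using neg_mink_le_cosh_longest_side[of "\<sigma> 1" "\<sigma> 2" Q] neg_mink_le_cosh_longest_side[of "\<sigma> 2" "\<sigma> 0" Q]
      neg_mink_le_cosh_longest_side[of "\<sigma> 0" "\<sigma> 1" Q]
    by (simp add: cosh_longest_side_def[of "Q (\<sigma> 0)"])
qed

section \<open>Convergence\<close>

lemma tendsto_unique_fixpoint_of_iteration_bound:
  fixes X :: "nat \<Rightarrow> real" and g :: "real \<Rightarrow> real"
  assumes lower: "\<And>k. a \<le> X k" and step: "\<And>k. X (Suc k) \<le> g (X k)"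
    and below: "\<And>x. a \<le> x \<Longrightarrow> g x \<le> x" and cont: "continuous_on {a..} g"
    and fixpoint: "\<And>x. a \<le> x \<Longrightarrow> g x = x \<Longrightarrow> x = a"
  shows "X \<longlonglongrightarrow> a"
proof -
  have "decseq X"
    using step below lower by (intro decseq_SucI) (meson order_trans)
  then obtain L where L: "X \<longlonglongrightarrow> L"
    using decseq_convergent lower by blast
  have "a \<le> L"
    using L lower by (meson LIMSEQ_le_const)
  have "(\<lambda>k. g (X k)) \<longlonglongrightarrow> g L"
    using continuous_on_tendsto_compose[OF cont L] \<open>a \<le> L\<close> lower by simp
  then have "L \<le> g L"
    using LIMSEQ_le[OF LIMSEQ_Suc[OF L]] step by blast
  with below \<open>a \<le> L\<close> have "g L = L"
    by (simp add: antisym)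
  with fixpoint \<open>a \<le> L\<close> L show ?thesis
    by auto
qed

lemma napoleon_bound_iteration_tendsto_1:
  fixes X :: "nat \<Rightarrow> real"
  assumes "\<And>k. 1 \<le> X k" "\<And>k. X (Suc k) \<le> napoleon_bound (X k)"
  shows "X \<longlonglongrightarrow> 1"
proof (rule tendsto_unique_fixpoint_of_iteration_bound[where g = napoleon_bound])
  show "continuous_on {1..} napoleon_bound"
    unfolding napoleon_bound_def by (intro continuous_intros) auto
qed (use assms in \<open>auto simp: napoleon_bound_def\<close>)

locale napoleon_iteration =
  fixes e :: real and P :: "nat \<Rightarrow> nat \<Rightarrow> real^3" and \<sigma> :: "nat \<Rightarrow> nat \<Rightarrow> nat"
  assumes sign: "e = 1 \<or> e = -1"
    and init: "\<And>i. i < 3 \<Longrightarrow> P 0 i \<in> hyp"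
    and perm: "\<And>k. \<sigma> k permutes {0, 1, 2}"
    and oriented: "\<And>k. 0 \<le> mink (hcross (P k (\<sigma> k 0)) (P k (\<sigma> k 1))) (P k (\<sigma> k 2))"
    and step: "\<And>k i. i < 3 \<Longrightarrow>
      P (Suc k) i = napR e (P k (\<sigma> k ((i + 1) mod 3))) (P k (\<sigma> k ((i + 2) mod 3)))"
begin

lemma perm_less_3: "j < 3 \<Longrightarrow> \<sigma> k j < 3"
  using permutes_in_image[OF perm[of k], of j] by auto

lemma in_hyp: "i < 3 \<Longrightarrow> P k i \<in> hyp"
proof (induction k arbitrary: i)
  case 0
  then show ?case
    by (rule init)
next
  case (Suc k)
  then show ?case
    by (simp add: step napR_in_hyp sign perm_less_3)
qed

lemma cosh_longest_side_Suc_le: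
  "cosh_longest_side (P (Suc k) 0) (P (Suc k) 1) (P (Suc k) 2)
     \<le> napoleon_bound (cosh_longest_side (P k 0) (P k 1) (P k 2))"
proof -
  define Q where "Q j = P k (\<sigma> k j)" for j
  have "P (Suc k) 0 = napR e (Q 1) (Q 2)" "P (Suc k) 1 = napR e (Q 2) (Q 0)"
    "P (Suc k) 2 = napR e (Q 0) (Q 1)"
    using step[of 0 k] step[of 1 k] step[of 2 k] by (simp_all add: Q_def numeral_2_eq_2)
  moreover have "cosh_longest_side (napR e (Q 1) (Q 2)) (napR e (Q 2) (Q 0)) (napR e (Q 0) (Q 1))
      \<le> napoleon_bound (cosh_longest_side (P k 0) (P k 1) (P k 2))"
  proof (rule cosh_longest_side_napR_le)
    show "cosh_longest_side (Q 0) (Q 1) (Q 2) \<le> cosh_longest_side (P k 0) (P k 1) (P k 2)"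
      unfolding Q_def by (rule cosh_longest_side_permutes_le[OF perm])
  qed (use oriented[of k] in \<open>simp_all add: Q_def in_hyp perm_less_3 sign\<close>)
  ultimately show ?thesis
    by simp
qed

lemma cosh_longest_side_tendsto_1: "(\<lambda>k. cosh_longest_side (P k 0) (P k 1) (P k 2)) \<longlonglongrightarrow> 1"
proof (rule napoleon_bound_iteration_tendsto_1)
  show "1 \<le> cosh_longest_side (P k 0) (P k 1) (P k 2)" for k
    using hyp_neg_mink_ge_1[of "P k 1" "P k 2"] by (simp add: cosh_longest_side_def in_hyp)
qed (rule cosh_longest_side_Suc_le)

lemma side_tendsto_1:
  assumes "i < 3"
  shows "(\<lambda>k. - mink (P k ((i + 1) mod 3)) (P k ((i + 2) mod 3))) \<longlonglongrightarrow> 1"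
proof (rule tendsto_sandwich[OF always_eventually always_eventually tendsto_const
      cosh_longest_side_tendsto_1]; intro allI)
  fix k
  have "i = 0 \<or> i = 1 \<or> i = 2"
    using assms by auto
  then have "(i + 1) mod 3 \<noteq> (i + 2) mod 3"
    by (elim disjE) simp_all
  then show "- mink (P k ((i + 1) mod 3)) (P k ((i + 2) mod 3)) \<le> cosh_longest_side (P k 0) (P k 1) (P k 2)"
    by (intro neg_mink_le_cosh_longest_side) simp_all
  show "1 \<le> - mink (P k ((i + 1) mod 3)) (P k ((i + 2) mod 3))"
    by (intro hyp_neg_mink_ge_1 in_hyp) auto
qed

end

theorem theorem1p2:
  fixes eps :: real and P :: "nat \<Rightarrow> nat \<Rightarrow> real^3" and \<sigma> :: "nat \<Rightarrow> nat \<Rightarrow> nat"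
  assumes eps: "eps = 1 \<or> eps = -1"
    and tri: "hyp_triangle (P 0 0) (P 0 1) (P 0 2)"
    and perm: "\<And>k. \<sigma> k permutes {0, 1, 2}"
    and orient: "\<And>k. mink (hcross (P k (\<sigma> k 0)) (P k (\<sigma> k 1))) (P k (\<sigma> k 2)) \<ge> 0"
    and step: "\<And>k i. i < 3 \<Longrightarrow>
      P (Suc k) i = napR eps (P k (\<sigma> k ((i + 1) mod 3))) (P k (\<sigma> k ((i + 2) mod 3)))"
  shows "\<forall>i < 3. ((\<lambda>k. - mink (P k ((i + 1) mod 3)) (P k ((i + 2) mod 3))) \<longlongrightarrow> 1) sequentially"
proof -
  have "P 0 i \<in> hyp" if "i < 3" for i
  proof -
    have "i = 0 \<or> i = 1 \<or> i = 2"
      using that by auto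
    then show ?thesis
      using tri by (elim disjE) (simp_all add: hyp_triangle_def)
  qed
  then interpret napoleon_iteration eps P \<sigma>
    using eps perm orient step by unfold_locales
  show ?thesis
    using side_tendsto_1 by blast
qed

end
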